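(* Let $O$ be an operator on $\mathcal{H}=(\mathbb{C}^2)^{\otimes n}$ with spectral norm $\|O\|$, and let $\lambda$ be such that $\langle \mathbb{1}\rangle(\lambda)>0$. Let $\varepsilon>0$ and $\kappa>0$. Suppose both estimators $\hat{\langle O\rangle}$ and $\hat{\langle \mathbb{1}\rangle}$ are computed with sample size $M$ satisfying $$M\ge \frac{\chi^2}{\kappa\,\varepsilon^2\,\langle \mathbb{1}\rangle(\lambda)^2},\qquad \chi=\sqrt{\|O\|^2+\sigma_O^2}+\sqrt{1+\sigma_{\mathbb{1}}^2}\,\|O\|+\varepsilon\sqrt{1+\sigma_{\mathbb{1}}^2}.$$ Then $$\Pr\left(\left|\frac{\hat{\langle O\rangle}}{\hat{\langle \mathbb{1}\rangle}}-\widetilde{\langle O\rangle}(\lambda)\right|\le\varepsilon\right)\ge 1-2\kappa .$$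
   Context: Setting (variational quantum-circuit Monte Carlo). Fix $n$ qubits with Hilbert space $\mathcal{H}=(\mathbb{C}^2)^{\otimes n}$. A parameterised circuit gives normalised states $|\phi(\theta)\rangle=U(\theta)|0\rangle^{\otimes n}$, $\theta\in\Theta\subseteq\mathbb{R}^K$, with $U(\theta)$ unitary. A complex-valued guiding function $\alpha(\theta;\lambda)$ depends on parameters $\lambda$; let $C(\lambda)=\int_\Theta|\alpha(\theta;\lambda)|\,d\theta$ (finite and positive), $P(\theta;\lambda)=|\alpha(\theta;\lambda)|/C(\lambda)$ (a probability density), and $e^{i\gamma(\theta;\lambda)}=\alpha(\theta;\lambda)/|\alpha(\theta;\lambda)|$. The (unnormalised) variational state is $|\psi(\lambda)\rangle=\int_\Theta P(\theta;\lambda)e^{i\gamma(\theta;\lambda)}|\phi(\theta)\rangle\,d\theta$. For an operator $O$, $\langle O\rangle(\lambda)=\langle\psi(\lambda)|O|\psi(\lambda)\rangle$ and $\widetilde{\langle O\rangle}(\lambda)=\langle O\rangle(\lambda)/\langle \mathbb{1}\rangle(\lambda)$, where $\mathbb{1}$ is the identity. Estimator: for $\theta,\theta'\in\Theta$ let $X_{\theta,\theta'}=e^{i[\gamma(\theta;\lambda)-\gamma(\theta';\lambda)]}\langle\phi(\theta')|O|\phi(\theta)\rangle$. It is assumed that for each pair $(\theta,\theta')$ a (quantum measurement) procedure outputs a random variable $\hat X_{\theta,\theta'}$ that is an unbiased estimator of $X_{\theta,\theta'}$ with variance $\mathbb{E}|\hat X_{\theta,\theta'}-X_{\theta,\theta'}|^2\le\sigma_O^2$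 for all $\theta,\theta'$. The estimator $\hat{\langle O\rangle}$ with sample size $M$ draws $M$ independent pairs $(\theta_l,\theta_l')$ from the density $P(\theta;\lambda)P(\theta';\lambda)$, obtains independent $\hat X_{\theta_l,\theta_l'}$, and outputs their average $\frac1M\sum_{l=1}^M\hat X_{\theta_l,\theta'_l}$. The estimator $\hat{\langle \mathbb{1}\rangle}$ is the same construction for $O=\mathbb{1}$, with per-pair variance bound $\sigma_{\mathbb{1}}^2$. *)

theory Defs
  imports "HOL-Probability.Probability"
begin

text \<open>The n-qubit Hilbert space (C^2)^(tensor n) is identified with C^d, d = 2^n,
  via the computational basis. Vectors are functions nat => complex (only indices below d
  matter), operators are matrices nat => nat => complex (only indices below d matter).\<close>

definition qdim :: "nat \<Rightarrow> nat" where
  "qdim n = 2 ^ n"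

definition cinner :: "nat \<Rightarrow> (nat \<Rightarrow> complex) \<Rightarrow> (nat \<Rightarrow> complex) \<Rightarrow> complex" where
  "cinner d u v = (\<Sum>i<d. cnj (u i) * v i)"

definition mat_app :: "nat \<Rightarrow> (nat \<Rightarrow> nat \<Rightarrow> complex) \<Rightarrow> (nat \<Rightarrow> complex) \<Rightarrow> (nat \<Rightarrow> complex)" where
  "mat_app d A v = (\<lambda>i. \<Sum>j<d. A i j * v j)"

definition vnorm :: "nat \<Rightarrow> (nat \<Rightarrow> complex) \<Rightarrow> real" where
  "vnorm d v = sqrt (\<Sum>i<d. (cmod (v i))\<^sup>2)"

definition spec_norm :: "nat \<Rightarrow> (nat \<Rightarrow> nat \<Rightarrow> complex) \<Rightarrow> real" where
  "spec_norm d A = (SUP v \<in> {v. vnorm d v = 1}. vnorm d (mat_app d A v))"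

definition unitary_mat :: "nat \<Rightarrow> (nat \<Rightarrow> nat \<Rightarrow> complex) \<Rightarrow> bool" where
  "unitary_mat d U \<longleftrightarrow>
     (\<forall>i<d. \<forall>j<d. (\<Sum>k<d. cnj (U k i) * U k j) = (if i = j then 1 else 0)) \<and>
     (\<forall>i<d. \<forall>j<d. (\<Sum>k<d. U i k * cnj (U j k)) = (if i = j then 1 else 0))"

definition id_op :: "nat \<Rightarrow> nat \<Rightarrow> complex" where
  "id_op i j = (if i = j then 1 else 0)"

text \<open>|0>^(tensor n) is the first computational basis vector.\<close>
definition ket0 :: "nat \<Rightarrow> complex" where
  "ket0 i = (if i = 0 then 1 else 0)"

definition circ_state :: "nat \<Rightarrow> ('t \<Rightarrow> nat \<Rightarrow> nat \<Rightarrow> complex) \<Rightarrow> 't \<Rightarrow> (nat \<Rightarrow> complex)" where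
  "circ_state n U \<theta> = mat_app (qdim n) (U \<theta>) ket0"

definition Cnorm :: "(real^'k) set \<Rightarrow> ('p \<Rightarrow> real^'k \<Rightarrow> complex) \<Rightarrow> 'p \<Rightarrow> real" where
  "Cnorm \<Theta> \<alpha> lam = (\<integral>\<theta>\<in>\<Theta>. cmod (\<alpha> lam \<theta>) \<partial>lborel)"

definition Pdens :: "(real^'k) set \<Rightarrow> ('p \<Rightarrow> real^'k \<Rightarrow> complex) \<Rightarrow> 'p \<Rightarrow> real^'k \<Rightarrow> real" where
  "Pdens \<Theta> \<alpha> lam \<theta> = cmod (\<alpha> lam \<theta>) / Cnorm \<Theta> \<alpha> lam"

definition phase :: "('p \<Rightarrow> real^'k \<Rightarrow> complex) \<Rightarrow> 'p \<Rightarrow> real^'k \<Rightarrow> complex" where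
  "phase \<alpha> lam \<theta> = \<alpha> lam \<theta> / complex_of_real (cmod (\<alpha> lam \<theta>))"

definition Pmeas :: "(real^'k) set \<Rightarrow> ('p \<Rightarrow> real^'k \<Rightarrow> complex) \<Rightarrow> 'p \<Rightarrow> (real^'k) measure" where
  "Pmeas \<Theta> \<alpha> lam = density lborel (\<lambda>\<theta>. ennreal (indicator \<Theta> \<theta> * Pdens \<Theta> \<alpha> lam \<theta>))"

definition psi :: "nat \<Rightarrow> (real^'k) set \<Rightarrow> ('p \<Rightarrow> real^'k \<Rightarrow> complex)
                   \<Rightarrow> (real^'k \<Rightarrow> nat \<Rightarrow> nat \<Rightarrow> complex) \<Rightarrow> 'p \<Rightarrow> nat \<Rightarrow> complex" where
  "psi n \<Theta> \<alpha> U lam = (\<lambda>i. \<integral>\<theta>\<in>\<Theta>. complex_of_real (Pdens \<Theta> \<alpha> lam \<theta>) * phase \<alpha> lam \<theta>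
                                       * circ_state n U \<theta> i \<partial>lborel)"

definition expval :: "nat \<Rightarrow> (real^'k) set \<Rightarrow> ('p \<Rightarrow> real^'k \<Rightarrow> complex)
                   \<Rightarrow> (real^'k \<Rightarrow> nat \<Rightarrow> nat \<Rightarrow> complex) \<Rightarrow> 'p \<Rightarrow> (nat \<Rightarrow> nat \<Rightarrow> complex) \<Rightarrow> complex" where
  "expval n \<Theta> \<alpha> U lam Op =
     cinner (qdim n) (psi n \<Theta> \<alpha> U lam) (mat_app (qdim n) Op (psi n \<Theta> \<alpha> U lam))"

definition Xval :: "nat \<Rightarrow> ('p \<Rightarrow> real^'k \<Rightarrow> complex) \<Rightarrow> (real^'k \<Rightarrow> nat \<Rightarrow> nat \<Rightarrow> complex)
                   \<Rightarrow> 'p \<Rightarrow> (nat \<Rightarrow> nat \<Rightarrow> complex) \<Rightarrow> (real^'k) \<times> (real^'k) \<Rightarrow> complex" where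
  "Xval n \<alpha> U lam Op t = phase \<alpha> lam (fst t) * cnj (phase \<alpha> lam (snd t)) *
     cinner (qdim n) (circ_state n U (snd t)) (mat_app (qdim n) Op (circ_state n U (fst t)))"

text \<open>A measurement procedure: a Markov kernel Q from pairs (theta,theta') to complex
  outcomes; for every pair in Theta x Theta its output is an unbiased estimator of X
  with mean-square error at most sigma^2.\<close>
definition meas_procedure ::
  "((real^'k) \<times> (real^'k)) measure \<Rightarrow> (real^'k) set \<Rightarrow> ((real^'k) \<times> (real^'k) \<Rightarrow> complex) \<Rightarrow> real
     \<Rightarrow> ((real^'k) \<times> (real^'k) \<Rightarrow> complex measure) \<Rightarrow> bool" where
  "meas_procedure PP \<Theta> X \<sigma> Q \<longleftrightarrow>
     Q \<in> measurable PP (subprob_algebra borel) \<and>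
     (\<forall>t \<in> \<Theta> \<times> \<Theta>. prob_space (Q t) \<and>
        has_bochner_integral (Q t) (\<lambda>z. z) (X t) \<and>
        (\<integral>\<^sup>+ z. ennreal ((cmod (z - X t))\<^sup>2) \<partial>Q t) \<le> ennreal (\<sigma>\<^sup>2))"

text \<open>The sampling scheme on a probability space Omega: the pairs (T l, Y l), l < M, are
  independent; T l is distributed as P x P and, given T l = t, the outcome Y l is
  distributed as Q t.\<close>
definition sampling_scheme ::
  "'w measure \<Rightarrow> nat \<Rightarrow> ((real^'k) \<times> (real^'k)) measure \<Rightarrow> ((real^'k) \<times> (real^'k) \<Rightarrow> complex measure)
     \<Rightarrow> (nat \<Rightarrow> 'w \<Rightarrow> (real^'k) \<times> (real^'k)) \<Rightarrow> (nat \<Rightarrow> 'w \<Rightarrow> complex) \<Rightarrow> bool" where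
  "sampling_scheme \<Omega> M PP Q T Y \<longleftrightarrow>
     prob_space.indep_vars \<Omega> (\<lambda>_. PP \<Otimes>\<^sub>M borel) (\<lambda>l \<omega>. (T l \<omega>, Y l \<omega>)) {..<M} \<and>
     (\<forall>l<M. distr \<Omega> (PP \<Otimes>\<^sub>M borel) (\<lambda>\<omega>. (T l \<omega>, Y l \<omega>)) =
              PP \<bind> (\<lambda>t. distr (Q t) (PP \<Otimes>\<^sub>M borel) (\<lambda>z. (t, z))))"

definition sample_mean :: "nat \<Rightarrow> (nat \<Rightarrow> 'w \<Rightarrow> complex) \<Rightarrow> 'w \<Rightarrow> complex" where
  "sample_mean M Y \<omega> = (\<Sum>l<M. Y l \<omega>) / of_nat M"

end

theory Submission
  imports Defs
begin

text \<open>
  Under the product of two copies of the guiding distribution \<open>P\<close>, the pair term \<open>X\<close> has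
  mean \<open>\<langle>O\<rangle>(\<lambda>)\<close> (Fubini) and modulus at most \<open>\<parallel>O\<parallel>\<close>. An outcome of the measurement
  procedure is thus an unbiased estimate of \<open>\<langle>O\<rangle>(\<lambda>)\<close> whose mean-square deviation is at most
  \<open>\<sigma>\<^sup>2 + \<parallel>O\<parallel>\<^sup>2\<close> (measurement noise plus the spread of \<open>X\<close>), and averaging \<open>M\<close> independent
  outcomes divides this by \<open>M\<close>. By Chebyshev, each of the two sample means lies, with
  probability at least \<open>1 - \<kappa>\<close>, within \<open>x\<close> resp. \<open>y\<close> of its target. On the intersection of
  these events, the perturbation bound for a quotient together with
  \<open>|\<langle>O\<rangle>| \<le> \<parallel>O\<parallel> \<langle>1\<rangle>\<close> gives accuracy \<open>\<epsilon>\<close> as soon as \<open>x + (\<parallel>O\<parallel> + \<epsilon>) y \<le> \<epsilon> \<langle>1\<rangle>\<close>,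
  and the bound on \<open>M\<close> is exactly what makes this possible.
\<close>

section \<open>Vectors and operators in coordinates\<close>

lemma vnorm_nonneg: "0 \<le> vnorm d v"
  unfolding vnorm_def by (simp add: sum_nonneg)

lemma cmod_cinner_le: "cmod (cinner d u w) \<le> vnorm d u * vnorm d w"
proof -
  have "cmod (cinner d u w) \<le> (\<Sum>i<d. cmod (u i) * cmod (w i))"
    unfolding cinner_def by (rule order.trans[OF norm_sum]) (simp add: norm_mult)
  also have "\<dots> \<le> sqrt ((\<Sum>i<d. (cmod (u i))\<^sup>2) * (\<Sum>i<d. (cmod (w i))\<^sup>2))"
    by (rule real_le_rsqrt, rule Cauchy_Schwarz_ineq_sum)
  also have "\<dots> = vnorm d u * vnorm d w"
    unfolding vnorm_def by (simp add: real_sqrt_mult)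
  finally show ?thesis .
qed

lemma vnorm_eq_0D:
  assumes "vnorm d v = 0" and "i < d"
  shows "v i = 0"
proof -
  have "(\<Sum>i<d. (cmod (v i))\<^sup>2) = 0"
    using assms(1) unfolding vnorm_def by simp
  then have "(cmod (v i))\<^sup>2 = 0"
    using assms(2) by (subst (asm) sum_nonneg_eq_0_iff) auto
  then show ?thesis by simp
qed

lemma cmod_le_vnorm: "i < d \<Longrightarrow> cmod (v i) \<le> vnorm d v"
  unfolding vnorm_def by (rule real_le_rsqrt, rule member_le_sum) auto

lemma vnorm_mult: "vnorm d (\<lambda>i. c * v i) = cmod c * vnorm d v"
  unfolding vnorm_def
  by (simp add: norm_mult power_mult_distrib sum_distrib_left[symmetric] real_sqrt_mult)

lemma vnorm_cong: "(\<And>i. i < d \<Longrightarrow> u i = v i) \<Longrightarrow> vnorm d u = vnorm d v"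
  unfolding vnorm_def by simp

lemma vnorm_ket0: "0 < d \<Longrightarrow> vnorm d ket0 = 1"
proof -
  assume "0 < d"
  then have "(\<Sum>i<d. (cmod (ket0 i))\<^sup>2) = (\<Sum>i\<in>{0}. (cmod (ket0 i))\<^sup>2)"
    by (intro sum.mono_neutral_right) (auto simp: ket0_def)
  then show ?thesis unfolding vnorm_def by (simp add: ket0_def)
qed

lemma mat_app_mult: "mat_app d A (\<lambda>i. c * v i) = (\<lambda>i. c * mat_app d A v i)"
  unfolding mat_app_def by (simp add: sum_distrib_left algebra_simps)

lemma mat_app_id_op: "i < d \<Longrightarrow> mat_app d id_op v i = v i"
proof -
  have "(\<Sum>j<d. (if i = j then 1 else 0) * v j) = (\<Sum>j<d. if i = j then v j else 0)"
    by (rule sum.cong) auto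
  then show "i < d \<Longrightarrow> mat_app d id_op v i = v i"
    unfolding mat_app_def id_op_def by simp
qed

lemma bdd_above_vnorm_mat_app: "bdd_above ((\<lambda>v. vnorm d (mat_app d A v)) ` {v. vnorm d v = 1})"
proof (rule bdd_aboveI2)
  fix v assume "v \<in> {v. vnorm d v = 1}"
  then have v: "cmod (v j) \<le> 1" if "j < d" for j
    using cmod_le_vnorm[OF that, of v] by simp
  have "cmod (mat_app d A v i) \<le> (\<Sum>j<d. cmod (A i j))" for i
    unfolding mat_app_def
    by (rule order.trans[OF norm_sum]) (auto intro!: sum_mono mult_left_le v simp: norm_mult)
  then show "vnorm d (mat_app d A v) \<le> sqrt (\<Sum>i<d. (\<Sum>j<d. cmod (A i j))\<^sup>2)"
    unfolding vnorm_def by (intro real_sqrt_le_mono sum_mono power_mono) auto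
qed

lemma vnorm_mat_app_le_spec_norm: "vnorm d v = 1 \<Longrightarrow> vnorm d (mat_app d A v) \<le> spec_norm d A"
  unfolding spec_norm_def by (rule cSUP_upper[OF _ bdd_above_vnorm_mat_app]) simp

lemma spec_norm_nonneg: "0 < d \<Longrightarrow> 0 \<le> spec_norm d A"
  using vnorm_mat_app_le_spec_norm[OF vnorm_ket0, of d A] vnorm_nonneg[of d] by (meson order.trans)

lemma vnorm_mat_app_le: "vnorm d (mat_app d A v) \<le> spec_norm d A * vnorm d v"
proof (cases "vnorm d v = 0")
  case True
  then have "vnorm d (mat_app d A v) = 0"
    using vnorm_eq_0D[OF True] unfolding vnorm_def mat_app_def by simp
  then show ?thesis using True by simp
next
  case False
  define r where "r = vnorm d v"
  have r: "0 < r" using False vnorm_nonneg[of d v] unfolding r_def by simp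
  define w where "w = (\<lambda>i. complex_of_real (1 / r) * v i)"
  have "vnorm d w = 1"
    unfolding w_def vnorm_mult using r by (simp add: r_def norm_divide)
  then have "vnorm d (mat_app d A w) \<le> spec_norm d A"
    by (rule vnorm_mat_app_le_spec_norm)
  moreover have "vnorm d (mat_app d A w) = vnorm d (mat_app d A v) / r"
    unfolding w_def mat_app_mult vnorm_mult using r by (simp add: norm_divide)
  ultimately show ?thesis using r unfolding r_def[symmetric] by (simp add: field_simps)
qed

lemma spec_norm_id_op:
  assumes "0 < d"
  shows "spec_norm d id_op = 1"
proof -
  have "vnorm d (mat_app d id_op v) = vnorm d v" for v
    by (rule vnorm_cong) (simp add: mat_app_id_op)
  then have "(\<lambda>v. vnorm d (mat_app d id_op v)) ` {v. vnorm d v = 1} = {1}"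
    using vnorm_ket0[OF assms] by force
  then show ?thesis unfolding spec_norm_def by simp
qed

lemma cinner_id_op: "cinner d u (mat_app d id_op v) = cinner d u v"
  unfolding cinner_def by (intro sum.cong refl) (simp add: mat_app_id_op)

lemma cinner_self: "cinner d v v = complex_of_real ((vnorm d v)\<^sup>2)"
proof -
  have "cinner d v v = (\<Sum>i<d. complex_of_real ((cmod (v i))\<^sup>2))"
    unfolding cinner_def by (intro sum.cong refl) (metis complex_norm_square mult.commute)
  then show ?thesis unfolding vnorm_def by (simp add: sum_nonneg)
qed

lemma qdim_pos: "0 < qdim n"
  unfolding qdim_def by simp

lemma circ_state_eq: "circ_state n U \<theta> i = U \<theta> i 0"
proof -
  have "circ_state n U \<theta> i = (\<Sum>j\<in>{0}. U \<theta> i j * ket0 j)"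
    unfolding circ_state_def mat_app_def
    by (rule sum.mono_neutral_right) (use qdim_pos[of n] in \<open>auto simp: ket0_def\<close>)
  then show ?thesis by (simp add: ket0_def)
qed

lemma vnorm_circ_state:
  assumes "unitary_mat (qdim n) (U \<theta>)"
  shows "vnorm (qdim n) (circ_state n U \<theta>) = 1"
proof -
  have "(\<Sum>k<qdim n. cnj (U \<theta> k 0) * U \<theta> k 0) = 1"
    using assms qdim_pos[of n] unfolding unitary_mat_def by auto
  then have "complex_of_real ((vnorm (qdim n) (circ_state n U \<theta>))\<^sup>2) = 1"
    unfolding cinner_self[symmetric] cinner_def circ_state_eq .
  then have "(vnorm (qdim n) (circ_state n U \<theta>))\<^sup>2 = 1"
    using of_real_eq_1_iff by blast
  then show ?thesis
    using vnorm_nonneg[of "qdim n" "circ_state n U \<theta>"] by (simp add: power2_eq_1_iff)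
qed

lemma cmod_phase_le: "cmod (phase \<alpha> lam \<theta>) \<le> 1"
  unfolding phase_def by (cases "\<alpha> lam \<theta> = 0") (simp_all add: norm_divide)

lemma cmod_Xval_le:
  assumes "unitary_mat (qdim n) (U (fst t))" and "unitary_mat (qdim n) (U (snd t))"
  shows "cmod (Xval n \<alpha> U lam Op t) \<le> spec_norm (qdim n) Op"
proof -
  let ?\<phi> = "circ_state n U (fst t)" and ?\<phi>' = "circ_state n U (snd t)"
  have "cmod (cinner (qdim n) ?\<phi>' (mat_app (qdim n) Op ?\<phi>))
      \<le> vnorm (qdim n) ?\<phi>' * vnorm (qdim n) (mat_app (qdim n) Op ?\<phi>)"
    by (rule cmod_cinner_le)
  also have "\<dots> \<le> spec_norm (qdim n) Op"
    using vnorm_mat_app_le[of "qdim n" Op ?\<phi>] by (simp add: vnorm_circ_state assms)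
  finally have inner: "cmod (cinner (qdim n) ?\<phi>' (mat_app (qdim n) Op ?\<phi>)) \<le> spec_norm (qdim n) Op" .
  have "cmod (Xval n \<alpha> U lam Op t) = cmod (phase \<alpha> lam (fst t)) * cmod (phase \<alpha> lam (snd t))
      * cmod (cinner (qdim n) ?\<phi>' (mat_app (qdim n) Op ?\<phi>))"
    unfolding Xval_def by (simp add: norm_mult)
  also have "\<dots> \<le> 1 * 1 * spec_norm (qdim n) Op"
    by (intro mult_mono inner cmod_phase_le) (auto simp: spec_norm_nonneg qdim_pos)
  finally show ?thesis by simp
qed

lemma expval_id_op: "expval n \<Theta> \<alpha> U lam id_op = complex_of_real ((vnorm (qdim n) (psi n \<Theta> \<alpha> U lam))\<^sup>2)"
  unfolding expval_def cinner_id_op cinner_self ..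

lemma cmod_expval_le:
  "cmod (expval n \<Theta> \<alpha> U lam Op) \<le> spec_norm (qdim n) Op * Re (expval n \<Theta> \<alpha> U lam id_op)"
proof -
  let ?\<psi> = "psi n \<Theta> \<alpha> U lam"
  have "cmod (expval n \<Theta> \<alpha> U lam Op) \<le> vnorm (qdim n) ?\<psi> * vnorm (qdim n) (mat_app (qdim n) Op ?\<psi>)"
    unfolding expval_def by (rule cmod_cinner_le)
  also have "\<dots> \<le> vnorm (qdim n) ?\<psi> * (spec_norm (qdim n) Op * vnorm (qdim n) ?\<psi>)"
    by (intro mult_left_mono vnorm_mat_app_le vnorm_nonneg)
  finally show ?thesis unfolding expval_id_op by (simp add: power2_eq_square mult_ac)
qed

section \<open>Binds with a Markov kernel\<close>

text \<open>Unlike the library's \<open>integral_bind\<close>, which needs a bounded integrand, these only assume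
  integrability against the bind.\<close>

lemma integral_bind_nonneg:
  fixes f :: "'b \<Rightarrow> real"
  assumes N: "N \<in> measurable M (subprob_algebra B)" and M: "space M \<noteq> {}"
    and f: "f \<in> borel_measurable B" and nonneg: "\<And>y. 0 \<le> f y" and int: "integrable (M \<bind> N) f"
  shows "AE x in M. integrable (N x) f"
    and "integrable M (\<lambda>x. \<integral>y. f y \<partial>N x)"
    and "(\<integral>y. f y \<partial>(M \<bind> N)) = (\<integral>x. (\<integral>y. f y \<partial>N x) \<partial>M)"
proof -
  have f_ennreal: "(\<lambda>y. ennreal (f y)) \<in> borel_measurable B"
    using f by measurable
  have "sets (M \<bind> N) = sets B"
    by (rule sets_bind[OF sets_kernel[OF N] M])
  then have f_bind: "f \<in> borel_measurable (M \<bind> N)"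
    using f by (simp cong: measurable_cong_sets)
  have inner_nn: "(\<lambda>x. \<integral>\<^sup>+y. ennreal (f y) \<partial>N x) \<in> borel_measurable M"
    by (rule measurable_compose[OF N nn_integral_measurable_subprob_algebra[OF f_ennreal]])
  have inner: "(\<lambda>x. \<integral>y. f y \<partial>N x) \<in> borel_measurable M"
    by (rule measurable_compose[OF N integral_measurable_subprob_algebra[OF f]])
  have "(\<integral>\<^sup>+x. (\<integral>\<^sup>+y. ennreal (f y) \<partial>N x) \<partial>M) < \<infinity>"
    using int nonneg unfolding nn_integral_bind[OF f_ennreal N, symmetric] integrable_iff_bounded by simp
  then have "AE x in M. (\<integral>\<^sup>+y. ennreal (f y) \<partial>N x) \<noteq> \<infinity>"
    by (intro nn_integral_PInf_AE[OF inner_nn]) auto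
  then show AE_int: "AE x in M. integrable (N x) f"
    using AE_space
  proof eventually_elim
    case (elim x)
    have "f \<in> borel_measurable (N x)"
      using f unfolding measurable_cong_sets[OF sets_kernel[OF N elim(2)] refl] .
    then show "integrable (N x) f"
      by (rule integrableI_nonneg) (use elim nonneg in \<open>auto simp: less_top\<close>)
  qed
  have "(\<integral>\<^sup>+x. ennreal (\<integral>y. f y \<partial>N x) \<partial>M) = (\<integral>\<^sup>+x. (\<integral>\<^sup>+y. ennreal (f y) \<partial>N x) \<partial>M)"
    using AE_int by (intro nn_integral_cong_AE) (auto elim!: AE_mp intro!: nn_integral_eq_integral[symmetric] nonneg)
  also have "\<dots> = (\<integral>\<^sup>+y. ennreal (f y) \<partial>(M \<bind> N))"
    by (rule nn_integral_bind[OF f_ennreal N, symmetric])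
  finally have nn_eq: "(\<integral>\<^sup>+x. ennreal (\<integral>y. f y \<partial>N x) \<partial>M) = (\<integral>\<^sup>+y. ennreal (f y) \<partial>(M \<bind> N))" .
  show "integrable M (\<lambda>x. \<integral>y. f y \<partial>N x)"
    by (rule integrableI_nonneg[OF inner])
       (use int nn_eq nonneg in \<open>auto simp: integrable_iff_bounded\<close>)
  show "(\<integral>y. f y \<partial>(M \<bind> N)) = (\<integral>x. (\<integral>y. f y \<partial>N x) \<partial>M)"
    using nn_eq nonneg
    by (simp add: integral_eq_nn_integral[OF f_bind] integral_eq_nn_integral[OF inner])
qed

lemma integral_bind_real:
  fixes f :: "'b \<Rightarrow> real"
  assumes N: "N \<in> measurable M (subprob_algebra B)" and M: "space M \<noteq> {}"
    and f: "f \<in> borel_measurable B" and int: "integrable (M \<bind> N) f"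
  shows "(\<integral>y. f y \<partial>(M \<bind> N)) = (\<integral>x. (\<integral>y. f y \<partial>N x) \<partial>M)"
proof -
  define fp where "fp y = max 0 (f y)" for y
  define fm where "fm y = max 0 (- f y)" for y
  have f_eq: "f = (\<lambda>y. fp y - fm y)"
    unfolding fp_def fm_def by auto
  have meas: "fp \<in> borel_measurable B" "fm \<in> borel_measurable B"
    unfolding fp_def[abs_def] fm_def[abs_def] using f by measurable
  have nonneg: "\<And>y. 0 \<le> fp y" "\<And>y. 0 \<le> fm y"
    unfolding fp_def fm_def by auto
  have "integrable (M \<bind> N) fp" "integrable (M \<bind> N) fm"
    unfolding fp_def fm_def using int by auto
  note p = integral_bind_nonneg[OF N M meas(1) nonneg(1) this(1)]
    and m = integral_bind_nonneg[OF N M meas(2) nonneg(2) this(2)]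
  have "(\<integral>y. f y \<partial>(M \<bind> N)) = (\<integral>x. (\<integral>y. fp y \<partial>N x) \<partial>M) - (\<integral>x. (\<integral>y. fm y \<partial>N x) \<partial>M)"
    using \<open>integrable (M \<bind> N) fp\<close> \<open>integrable (M \<bind> N) fm\<close> by (simp add: f_eq p(3) m(3))
  also have "\<dots> = (\<integral>x. (\<integral>y. fp y \<partial>N x) - (\<integral>y. fm y \<partial>N x) \<partial>M)"
    using p(2) m(2) by simp
  also have "\<dots> = (\<integral>x. (\<integral>y. f y \<partial>N x) \<partial>M)"
  proof (rule integral_cong_AE)
    show "(\<lambda>x. (\<integral>y. fp y \<partial>N x) - (\<integral>y. fm y \<partial>N x)) \<in> borel_measurable M"
      using p(2) m(2) by auto
    show "(\<lambda>x. \<integral>y. f y \<partial>N x) \<in> borel_measurable M"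
      by (rule measurable_compose[OF N integral_measurable_subprob_algebra[OF f]])
    show "AE x in M. (\<integral>y. fp y \<partial>N x) - (\<integral>y. fm y \<partial>N x) = (\<integral>y. f y \<partial>N x)"
      using p(1) m(1) by eventually_elim (simp add: f_eq)
  qed
  finally show ?thesis .
qed

lemma measurable_kernel_Pair:
  assumes Q: "Q \<in> measurable PP (subprob_algebra N)"
  shows "(\<lambda>t. distr (Q t) (PP \<Otimes>\<^sub>M N) (\<lambda>z. (t, z))) \<in> measurable PP (subprob_algebra (PP \<Otimes>\<^sub>M N))"
proof -
  have "(\<lambda>t. Q t \<bind> (\<lambda>z. return (PP \<Otimes>\<^sub>M N) (t, z))) \<in> measurable PP (subprob_algebra (PP \<Otimes>\<^sub>M N))"
    by (rule measurable_bind'[OF Q]) (simp add: return_measurable)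
  moreover have "Q t \<bind> (\<lambda>z. return (PP \<Otimes>\<^sub>M N) (t, z)) = distr (Q t) (PP \<Otimes>\<^sub>M N) (\<lambda>z. (t, z))"
    if t: "t \<in> space PP" for t
  proof (rule bind_return_distr')
    have sets: "sets (Q t) = sets N"
      by (rule sets_kernel[OF Q t])
    show "space (Q t) \<noteq> {}"
      using subprob_space_kernel[OF Q t] by (simp add: subprob_space.subprob_not_empty)
    show "(\<lambda>z. (t, z)) \<in> measurable (Q t) (PP \<Otimes>\<^sub>M N)"
      unfolding measurable_cong_sets[OF sets refl] by (rule measurable_Pair1'[OF t])
  qed
  ultimately show ?thesis
    by (rule measurable_cong[THEN iffD1, rotated]) simp
qed

lemma distr_snd_bind_kernel_Pair:
  assumes Q: "Q \<in> measurable PP (subprob_algebra N)" and PP: "space PP \<noteq> {}"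
  shows "distr (PP \<bind> (\<lambda>t. distr (Q t) (PP \<Otimes>\<^sub>M N) (\<lambda>z. (t, z)))) N snd = PP \<bind> Q"
proof -
  have "distr (PP \<bind> (\<lambda>t. distr (Q t) (PP \<Otimes>\<^sub>M N) (\<lambda>z. (t, z)))) N snd
      = PP \<bind> (\<lambda>t. distr (distr (Q t) (PP \<Otimes>\<^sub>M N) (\<lambda>z. (t, z))) N snd)"
    by (rule distr_bind[OF measurable_kernel_Pair[OF Q] PP measurable_snd])
  also have "\<dots> = PP \<bind> Q"
  proof (rule bind_cong[OF refl])
    fix t assume t: "t \<in> space PP"
    have sets: "sets (Q t) = sets N"
      by (rule sets_kernel[OF Q t])
    have "(\<lambda>z. (t, z)) \<in> measurable (Q t) (PP \<Otimes>\<^sub>M N)"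
      unfolding measurable_cong_sets[OF sets refl] by (rule measurable_Pair1'[OF t])
    then have "distr (distr (Q t) (PP \<Otimes>\<^sub>M N) (\<lambda>z. (t, z))) N snd = distr (Q t) N (\<lambda>z. z)"
      by (simp add: distr_distr comp_def)
    also have "\<dots> = Q t"
      by (rule distr_id2[OF sets[symmetric]])
    finally show "distr (distr (Q t) (PP \<Otimes>\<^sub>M N) (\<lambda>z. (t, z))) N snd = Q t" .
  qed
  finally show ?thesis .
qed

section \<open>Mean-square deviations and sample means\<close>

lemma borel_measurable_cnj [measurable (raw)]:
  "f \<in> borel_measurable M \<Longrightarrow> (\<lambda>x. cnj (f x)) \<in> borel_measurable M"
  by (rule measurable_compose[OF _ borel_measurable_continuous_onI[OF continuous_on_cnj[OF continuous_on_id]]])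

lemma integrable_integral_le_of_nn_integral_le:
  fixes f :: "'a \<Rightarrow> real"
  assumes f: "f \<in> borel_measurable M" and nonneg: "\<And>x. 0 \<le> f x"
    and le: "(\<integral>\<^sup>+x. ennreal (f x) \<partial>M) \<le> ennreal c" and "0 \<le> c"
  shows "integrable M f" and "(\<integral>x. f x \<partial>M) \<le> c"
proof -
  show int: "integrable M f"
    by (rule integrableI_nonneg[OF f]) (use le nonneg in \<open>auto simp: less_top[symmetric] top_unique\<close>)
  have "ennreal (\<integral>x. f x \<partial>M) \<le> ennreal c"
    using le by (subst nn_integral_eq_integral[OF int, symmetric]) (auto simp: nonneg)
  then show "(\<integral>x. f x \<partial>M) \<le> c"
    using \<open>0 \<le> c\<close> by (subst (asm) ennreal_le_iff) auto
qed

lemma cmod_diff_square_recenter: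
  "(cmod (z - c))\<^sup>2 = (cmod (z - c0))\<^sup>2 + 2 * Re ((z - c0) * cnj (c0 - c)) + (cmod (c0 - c))\<^sup>2"
  unfolding cmod_power2 by (simp add: power2_eq_square algebra_simps)

context prob_space
begin

lemma integrable_cmod_diff_square:
  fixes f :: "'a \<Rightarrow> complex"
  assumes "integrable M f" and "integrable M (\<lambda>x. (cmod (f x - c0))\<^sup>2)"
  shows "integrable M (\<lambda>x. (cmod (f x - c))\<^sup>2)"
proof -
  have eq: "(cmod (f x - c))\<^sup>2 = (cmod (f x - c0))\<^sup>2 + 2 * Re ((f x - c0) * cnj (c0 - c)) + (cmod (c0 - c))\<^sup>2" for x
    by (rule cmod_diff_square_recenter)
  show ?thesis
    unfolding eq
    by (intro Bochner_Integration.integrable_add Bochner_Integration.integrable_mult_right integrable_Re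
        integrable_mult_left Bochner_Integration.integrable_diff assms integrable_const)
qed

lemma integral_cmod_diff_square:
  fixes f :: "'a \<Rightarrow> complex"
  assumes f: "integrable M f" and sq: "integrable M (\<lambda>x. (cmod (f x - c0))\<^sup>2)"
  shows "(\<integral>x. (cmod (f x - c))\<^sup>2 \<partial>M) = (\<integral>x. (cmod (f x - expectation f))\<^sup>2 \<partial>M) + (cmod (expectation f - c))\<^sup>2"
proof -
  let ?m = "expectation f"
  have eq: "(cmod (f x - c))\<^sup>2 = (cmod (f x - ?m))\<^sup>2 + 2 * Re ((f x - ?m) * cnj (?m - c)) + (cmod (?m - c))\<^sup>2" for x
    by (rule cmod_diff_square_recenter)
  have centered: "integrable M (\<lambda>x. f x - ?m)"
    using f by simp
  have spread: "integrable M (\<lambda>x. (cmod (f x - ?m))\<^sup>2)"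
    by (rule integrable_cmod_diff_square[OF f sq])
  have cross: "integrable M (\<lambda>x. 2 * Re ((f x - ?m) * cnj (?m - c)))"
    by (intro Bochner_Integration.integrable_mult_right integrable_Re integrable_mult_left centered)
  have "(\<integral>x. Re ((f x - ?m) * cnj (?m - c)) \<partial>M) = Re ((\<integral>x. f x - ?m \<partial>M) * cnj (?m - c))"
    by (simp only: integral_Re[OF integrable_mult_left[OF centered]] integral_mult_left_zero)
  also have "\<dots> = 0"
    using f by (simp add: prob_space)
  finally have "(\<integral>x. 2 * Re ((f x - ?m) * cnj (?m - c)) \<partial>M) = 0"
    unfolding integral_mult_right_zero by simp
  then show ?thesis
    unfolding eq Bochner_Integration.integral_add[OF Bochner_Integration.integrable_add[OF spread cross] integrable_const]
      Bochner_Integration.integral_add[OF spread cross] lebesgue_integral_const prob_space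
    by simp
qed

lemma integrable_of_integrable_cmod_diff_square:
  fixes f :: "'a \<Rightarrow> complex"
  assumes f: "f \<in> borel_measurable M" and sq: "integrable M (\<lambda>x. (cmod (f x - c))\<^sup>2)"
  shows "integrable M f"
proof (rule Bochner_Integration.integrable_bound[OF _ f])
  show "integrable M (\<lambda>x. (cmod (f x - c))\<^sup>2 + (1 + cmod c))"
    by (intro Bochner_Integration.integrable_add sq integrable_const)
  have "cmod z \<le> (cmod (z - c))\<^sup>2 + (1 + cmod c)" for z
  proof -
    have "cmod z \<le> cmod (z - c) + cmod c"
      using norm_triangle_ineq[of "z - c" c] by simp
    moreover have "0 \<le> (cmod (z - c) - 1)\<^sup>2"
      by simp
    then have "2 * cmod (z - c) \<le> (cmod (z - c))\<^sup>2 + 1"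
      by (simp add: power2_diff)
    then have "cmod (z - c) \<le> (cmod (z - c))\<^sup>2 + 1"
      using norm_ge_zero[of "z - c"] by linarith
    ultimately show ?thesis by linarith
  qed
  then show "AE x in M. norm (f x) \<le> norm ((cmod (f x - c))\<^sup>2 + (1 + cmod c))"
    by auto
qed

end

lemma (in prob_space) integral_indep_centered_product:
  fixes Y :: "'i \<Rightarrow> 'a \<Rightarrow> complex"
  assumes indep: "indep_vars (\<lambda>_. borel) Y I"
    and "l \<in> I" and "k \<in> I" and "l \<noteq> k"
    and int_l: "integrable M (Y l)" and int_k: "integrable M (Y k)" and mean_l: "(\<integral>\<omega>. Y l \<omega> \<partial>M) = m"
  shows "integrable M (\<lambda>\<omega>. (Y l \<omega> - m) * cnj (Y k \<omega> - m))"
    and "(\<integral>\<omega>. (Y l \<omega> - m) * cnj (Y k \<omega> - m) \<partial>M) = 0"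
proof -
  define h where "h i z = (if i = l then z - m else cnj (z - m))" for i z
  have prod_eq: "(\<Prod>i\<in>{l, k}. h i (Y i \<omega>)) = (Y l \<omega> - m) * cnj (Y k \<omega> - m)" for \<omega>
    using \<open>l \<noteq> k\<close> unfolding h_def by simp
  have "indep_vars (\<lambda>_. borel) (\<lambda>i \<omega>. h i (Y i \<omega>)) {l, k}"
    by (rule indep_vars_compose2[OF indep_vars_subset[OF indep]]) (use assms in \<open>auto simp: h_def\<close>)
  moreover have "integrable M (\<lambda>\<omega>. h i (Y i \<omega>))" if "i \<in> {l, k}" for i
    using that int_l int_k \<open>l \<noteq> k\<close> unfolding h_def by auto
  ultimately have "integrable M (\<lambda>\<omega>. \<Prod>i\<in>{l, k}. h i (Y i \<omega>))"
    and "(\<integral>\<omega>. (\<Prod>i\<in>{l, k}. h i (Y i \<omega>)) \<partial>M) = (\<Prod>i\<in>{l, k}. \<integral>\<omega>. h i (Y i \<omega>) \<partial>M)"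
    by (auto intro!: indep_vars_integrable indep_vars_lebesgue_integral)
  moreover have "(\<integral>\<omega>. h l (Y l \<omega>) \<partial>M) = 0"
    using int_l mean_l by (simp add: h_def prob_space)
  ultimately show "integrable M (\<lambda>\<omega>. (Y l \<omega> - m) * cnj (Y k \<omega> - m))"
    and "(\<integral>\<omega>. (Y l \<omega> - m) * cnj (Y k \<omega> - m) \<partial>M) = 0"
    using \<open>l \<noteq> k\<close> unfolding prod_eq by auto
qed

lemma integral_cmod_sum_square_le:
  fixes Z :: "nat \<Rightarrow> 'a \<Rightarrow> complex"
  assumes orth: "\<And>l k. l < N \<Longrightarrow> k < N \<Longrightarrow> l \<noteq> k \<Longrightarrow>
        integrable M (\<lambda>\<omega>. Z l \<omega> * cnj (Z k \<omega>)) \<and> (\<integral>\<omega>. Z l \<omega> * cnj (Z k \<omega>) \<partial>M) = 0"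
    and square: "\<And>l. l < N \<Longrightarrow> integrable M (\<lambda>\<omega>. (cmod (Z l \<omega>))\<^sup>2) \<and> (\<integral>\<omega>. (cmod (Z l \<omega>))\<^sup>2 \<partial>M) \<le> V"
  shows "integrable M (\<lambda>\<omega>. (cmod (\<Sum>l<N. Z l \<omega>))\<^sup>2)"
    and "(\<integral>\<omega>. (cmod (\<Sum>l<N. Z l \<omega>))\<^sup>2 \<partial>M) \<le> real N * V"
proof -
  define T where "T l k \<omega> = Z l \<omega> * cnj (Z k \<omega>)" for l k \<omega>
  have diag: "T l l = (\<lambda>\<omega>. complex_of_real ((cmod (Z l \<omega>))\<^sup>2))" for l
    unfolding T_def by (simp only: complex_norm_square)
  have int_T: "integrable M (T l k)" if "l < N" "k < N" for l k
  proof (cases "l = k")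
    case True
    then show ?thesis
      using square[OF that(1)] unfolding True diag complex_of_real_integrable_eq by simp
  next
    case False
    then show ?thesis using orth[OF that] by (simp add: T_def[abs_def])
  qed
  have integral_T: "(\<integral>\<omega>. T l k \<omega> \<partial>M) = (if l = k then complex_of_real (\<integral>\<omega>. (cmod (Z l \<omega>))\<^sup>2 \<partial>M) else 0)"
    if "l < N" "k < N" for l k
  proof (cases "l = k")
    case True
    then show ?thesis unfolding True diag integral_complex_of_real by simp
  next
    case False
    then show ?thesis using orth[OF that] by (simp add: T_def[abs_def])
  qed
  have expand: "complex_of_real ((cmod (\<Sum>l<N. Z l \<omega>))\<^sup>2) = (\<Sum>l<N. \<Sum>k<N. T l k \<omega>)" for \<omega>
    unfolding T_def complex_norm_square cnj_sum sum_product ..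
  have int_sum: "integrable M (\<lambda>\<omega>. \<Sum>l<N. \<Sum>k<N. T l k \<omega>)"
    by (intro Bochner_Integration.integrable_sum) (auto intro: int_T)
  then show "integrable M (\<lambda>\<omega>. (cmod (\<Sum>l<N. Z l \<omega>))\<^sup>2)"
    unfolding expand[symmetric] complex_of_real_integrable_eq .
  have "complex_of_real (\<integral>\<omega>. (cmod (\<Sum>l<N. Z l \<omega>))\<^sup>2 \<partial>M) = (\<Sum>l<N. \<Sum>k<N. \<integral>\<omega>. T l k \<omega> \<partial>M)"
    unfolding integral_complex_of_real[symmetric] expand
    by (subst Bochner_Integration.integral_sum, fastforce intro: int_T Bochner_Integration.integrable_sum)
       (auto intro!: sum.cong Bochner_Integration.integral_sum int_T)
  also have "\<dots> = (\<Sum>l<N. \<Sum>k<N. if l = k then complex_of_real (\<integral>\<omega>. (cmod (Z l \<omega>))\<^sup>2 \<partial>M) else 0)"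
    by (intro sum.cong refl) (simp add: integral_T)
  also have "\<dots> = complex_of_real (\<Sum>l<N. \<integral>\<omega>. (cmod (Z l \<omega>))\<^sup>2 \<partial>M)"
    by (simp add: sum.delta)
  finally have "(\<integral>\<omega>. (cmod (\<Sum>l<N. Z l \<omega>))\<^sup>2 \<partial>M) = (\<Sum>l<N. \<integral>\<omega>. (cmod (Z l \<omega>))\<^sup>2 \<partial>M)"
    using of_real_eq_iff by blast
  also have "\<dots> \<le> (\<Sum>l<N. V)"
    using square by (intro sum_mono) auto
  finally show "(\<integral>\<omega>. (cmod (\<Sum>l<N. Z l \<omega>))\<^sup>2 \<partial>M) \<le> real N * V"
    by simp
qed

lemma (in prob_space) mean_square_error_sample_mean:
  fixes Y :: "nat \<Rightarrow> 'a \<Rightarrow> complex" and \<nu> :: "complex measure"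
  assumes indep: "indep_vars (\<lambda>_. borel) Y {..<N}"
    and law: "\<And>l. l < N \<Longrightarrow> distr M borel (Y l) = \<nu>"
    and int: "integrable \<nu> (\<lambda>z. z)" and mean: "(\<integral>z. z \<partial>\<nu>) = m"
    and int_spread: "integrable \<nu> (\<lambda>z. (cmod (z - m))\<^sup>2)" and spread: "(\<integral>z. (cmod (z - m))\<^sup>2 \<partial>\<nu>) \<le> V"
    and "0 < N"
  shows "sample_mean N Y \<in> borel_measurable M"
    and "integrable M (\<lambda>\<omega>. (cmod (sample_mean N Y \<omega> - m))\<^sup>2)"
    and "(\<integral>\<omega>. (cmod (sample_mean N Y \<omega> - m))\<^sup>2 \<partial>M) \<le> V / N"
proof -
  have Y: "Y l \<in> borel_measurable M" if "l < N" for l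
    using indep that unfolding indep_vars_def by auto
  have id: "(\<lambda>z::complex. z) \<in> borel_measurable borel" and sq: "(\<lambda>z. (cmod (z - m))\<^sup>2) \<in> borel_measurable borel"
    by measurable
  have int_Y: "integrable M (Y l)" and mean_Y: "(\<integral>\<omega>. Y l \<omega> \<partial>M) = m" if "l < N" for l
    using int mean unfolding law[OF that, symmetric] integrable_distr_eq[OF Y[OF that] id] integral_distr[OF Y[OF that] id]
    by simp_all
  have spread_Y: "integrable M (\<lambda>\<omega>. (cmod (Y l \<omega> - m))\<^sup>2) \<and> (\<integral>\<omega>. (cmod (Y l \<omega> - m))\<^sup>2 \<partial>M) \<le> V"
    if "l < N" for l
    using int_spread spread
    unfolding law[OF that, symmetric] integrable_distr_eq[OF Y[OF that] sq] integral_distr[OF Y[OF that] sq]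
    by simp
  have orth: "integrable M (\<lambda>\<omega>. (Y l \<omega> - m) * cnj (Y k \<omega> - m)) \<and> (\<integral>\<omega>. (Y l \<omega> - m) * cnj (Y k \<omega> - m) \<partial>M) = 0"
    if "l < N" "k < N" "l \<noteq> k" for l k
    using integral_indep_centered_product[OF indep _ _ \<open>l \<noteq> k\<close> int_Y int_Y mean_Y] that by simp
  note sum_bound = integral_cmod_sum_square_le[of N M "\<lambda>l \<omega>. Y l \<omega> - m", OF orth spread_Y]
  have sq: "(cmod (sample_mean N Y \<omega> - m))\<^sup>2 = (cmod (\<Sum>l<N. Y l \<omega> - m))\<^sup>2 / (real N)\<^sup>2" for \<omega>
  proof -
    have "sample_mean N Y \<omega> - m = (\<Sum>l<N. Y l \<omega> - m) / of_nat N"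
      unfolding sample_mean_def sum_subtractf using \<open>0 < N\<close> by (simp add: field_simps)
    then show ?thesis by (simp add: norm_divide power_divide)
  qed
  show "sample_mean N Y \<in> borel_measurable M"
    unfolding sample_mean_def[abs_def] by (intro borel_measurable_divide borel_measurable_sum) (auto intro: Y)
  show "integrable M (\<lambda>\<omega>. (cmod (sample_mean N Y \<omega> - m))\<^sup>2)"
    unfolding sq using sum_bound(1) by simp
  have "(\<integral>\<omega>. (cmod (sample_mean N Y \<omega> - m))\<^sup>2 \<partial>M) \<le> (real N * V) / (real N)\<^sup>2"
    unfolding sq by (simp add: divide_right_mono sum_bound(2))
  then show "(\<integral>\<omega>. (cmod (sample_mean N Y \<omega> - m))\<^sup>2 \<partial>M) \<le> V / N"
    using \<open>0 < N\<close> by (simp add: power2_eq_square)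
qed

section \<open>Unbiased measurement kernels\<close>

locale unbiased_kernel =
  fixes PP :: "'a measure" and A :: "'a set" and Q :: "'a \<Rightarrow> complex measure"
    and X :: "'a \<Rightarrow> complex" and \<sigma> B :: real
  assumes prob_space_PP: "prob_space PP"
    and kernel: "Q \<in> measurable PP (subprob_algebra borel)"
    and AE_in_A: "AE t in PP. t \<in> A"
    and prob_space_Q: "\<And>t. t \<in> A \<Longrightarrow> prob_space (Q t)"
    and has_integral_Q: "\<And>t. t \<in> A \<Longrightarrow> has_bochner_integral (Q t) (\<lambda>z. z) (X t)"
    and spread_Q: "\<And>t. t \<in> A \<Longrightarrow> (\<integral>\<^sup>+z. ennreal ((cmod (z - X t))\<^sup>2) \<partial>Q t) \<le> ennreal (\<sigma>\<^sup>2)"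
    and measurable_X: "X \<in> borel_measurable PP"
    and bounded_X: "\<And>t. t \<in> A \<Longrightarrow> cmod (X t) \<le> B"
begin

sublocale PP: prob_space PP
  by (rule prob_space_PP)

lemma prob_space_mixture: "prob_space (PP \<bind> Q)"
proof -
  have "AE t in PP. prob_space (Q t)"
    using AE_in_A by eventually_elim (rule prob_space_Q)
  then show ?thesis
    by (rule PP.prob_space_bind[OF _ kernel])
qed

lemma sets_mixture: "sets (PP \<bind> Q) = sets borel"
  by (rule sets_bind[OF sets_kernel[OF kernel] PP.not_empty])

lemma integrable_X: "integrable PP X"
  by (rule PP.integrable_const_bound[where B=B]) (use AE_in_A bounded_X measurable_X in \<open>auto elim: AE_mp\<close>)

lemma spread_X:
  shows "integrable PP (\<lambda>t. (cmod (X t - (\<integral>t. X t \<partial>PP)))\<^sup>2)"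
    and "(\<integral>t. (cmod (X t - (\<integral>t. X t \<partial>PP)))\<^sup>2 \<partial>PP) \<le> B\<^sup>2"
proof -
  have bound: "AE t in PP. (cmod (X t - 0))\<^sup>2 \<le> B\<^sup>2"
    using AE_in_A by eventually_elim (auto intro!: power_mono bounded_X)
  have square: "integrable PP (\<lambda>t. (cmod (X t - 0))\<^sup>2)"
    by (rule PP.integrable_const_bound[where B="B\<^sup>2"]) (use bound measurable_X in auto)
  show "integrable PP (\<lambda>t. (cmod (X t - (\<integral>t. X t \<partial>PP)))\<^sup>2)"
    by (rule PP.integrable_cmod_diff_square[OF integrable_X square])
  have "(\<integral>t. (cmod (X t - (\<integral>t. X t \<partial>PP)))\<^sup>2 \<partial>PP) \<le> (\<integral>t. (cmod (X t - 0))\<^sup>2 \<partial>PP)"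
    unfolding PP.integral_cmod_diff_square[OF integrable_X square, of 0] by simp
  also have "\<dots> \<le> B\<^sup>2"
    by (rule PP.integral_le_const[OF square bound])
  finally show "(\<integral>t. (cmod (X t - (\<integral>t. X t \<partial>PP)))\<^sup>2 \<partial>PP) \<le> B\<^sup>2" .
qed

lemma nn_integral_spread_Q_le:
  assumes "t \<in> A" and "t \<in> space PP"
  shows "(\<integral>\<^sup>+z. ennreal ((cmod (z - c))\<^sup>2) \<partial>Q t) \<le> ennreal (\<sigma>\<^sup>2 + (cmod (X t - c))\<^sup>2)"
proof -
  interpret Qt: prob_space "Q t"
    by (rule prob_space_Q[OF assms(1)])
  have sets: "sets (Q t) = sets borel"
    by (rule sets_kernel[OF kernel assms(2)])
  have int: "integrable (Q t) (\<lambda>z. z)" and mean: "(\<integral>z. z \<partial>Q t) = X t"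
    using has_integral_Q[OF assms(1)] by (auto simp: has_bochner_integral_iff)
  have "(\<lambda>z. (cmod (z - X t))\<^sup>2) \<in> borel_measurable (Q t)"
    unfolding measurable_cong_sets[OF sets refl] by measurable
  note spread = integrable_integral_le_of_nn_integral_le[OF this zero_le_power2 spread_Q[OF assms(1)] zero_le_power2]
  have "(\<integral>\<^sup>+z. ennreal ((cmod (z - c))\<^sup>2) \<partial>Q t) = ennreal (\<integral>z. (cmod (z - c))\<^sup>2 \<partial>Q t)"
    by (intro nn_integral_eq_integral Qt.integrable_cmod_diff_square[OF int spread(1)]) auto
  also have "(\<integral>z. (cmod (z - c))\<^sup>2 \<partial>Q t) = (\<integral>z. (cmod (z - X t))\<^sup>2 \<partial>Q t) + (cmod (X t - c))\<^sup>2"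
    using Qt.integral_cmod_diff_square[OF int spread(1)] unfolding mean .
  finally show ?thesis
    using spread(2) by (simp add: ennreal_leI)
qed

lemma spread_mixture:
  shows "integrable (PP \<bind> Q) (\<lambda>z. (cmod (z - (\<integral>t. X t \<partial>PP)))\<^sup>2)"
    and "(\<integral>z. (cmod (z - (\<integral>t. X t \<partial>PP)))\<^sup>2 \<partial>(PP \<bind> Q)) \<le> \<sigma>\<^sup>2 + B\<^sup>2"
proof -
  let ?m = "\<integral>t. X t \<partial>PP"
  have "(\<integral>\<^sup>+z. ennreal ((cmod (z - ?m))\<^sup>2) \<partial>(PP \<bind> Q)) = (\<integral>\<^sup>+t. (\<integral>\<^sup>+z. ennreal ((cmod (z - ?m))\<^sup>2) \<partial>Q t) \<partial>PP)"
    by (rule nn_integral_bind[OF _ kernel]) measurable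
  also have "\<dots> \<le> (\<integral>\<^sup>+t. ennreal (\<sigma>\<^sup>2 + (cmod (X t - ?m))\<^sup>2) \<partial>PP)"
  proof (rule nn_integral_mono_AE)
    show "AE t in PP. (\<integral>\<^sup>+z. ennreal ((cmod (z - ?m))\<^sup>2) \<partial>Q t) \<le> ennreal (\<sigma>\<^sup>2 + (cmod (X t - ?m))\<^sup>2)"
      using AE_in_A AE_space[where M=PP] by eventually_elim (rule nn_integral_spread_Q_le)
  qed
  also have "\<dots> = ennreal (\<sigma>\<^sup>2 + (\<integral>t. (cmod (X t - ?m))\<^sup>2 \<partial>PP))"
    using spread_X(1) by (subst nn_integral_eq_integral) (auto simp: PP.prob_space)
  also have "\<dots> \<le> ennreal (\<sigma>\<^sup>2 + B\<^sup>2)"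
    using spread_X(2) by (simp add: ennreal_leI)
  finally have bound: "(\<integral>\<^sup>+z. ennreal ((cmod (z - ?m))\<^sup>2) \<partial>(PP \<bind> Q)) \<le> ennreal (\<sigma>\<^sup>2 + B\<^sup>2)" .
  have "(\<lambda>z. (cmod (z - ?m))\<^sup>2) \<in> borel_measurable (PP \<bind> Q)"
    unfolding measurable_cong_sets[OF sets_mixture refl] by measurable
  note spread = integrable_integral_le_of_nn_integral_le[OF this _ bound]
  show "integrable (PP \<bind> Q) (\<lambda>z. (cmod (z - ?m))\<^sup>2)"
    by (rule spread(1)) simp_all
  show "(\<integral>z. (cmod (z - ?m))\<^sup>2 \<partial>(PP \<bind> Q)) \<le> \<sigma>\<^sup>2 + B\<^sup>2"
    by (rule spread(2)) simp_all
qed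

lemma integrable_mixture: "integrable (PP \<bind> Q) (\<lambda>z. z)"
  by (rule prob_space.integrable_of_integrable_cmod_diff_square[OF prob_space_mixture _ spread_mixture(1)])
     (simp add: measurable_cong_sets[OF sets_mixture refl])

text \<open>\<open>integral_bind_real\<close> handles real integrands only, so the mean is obtained from its
  real and imaginary parts.\<close>

lemma integral_mixture: "(\<integral>z. z \<partial>(PP \<bind> Q)) = (\<integral>t. X t \<partial>PP)"
proof -
  have part: "(\<integral>z. g z \<partial>(PP \<bind> Q)) = g (\<integral>t. X t \<partial>PP)" if g: "g = Re \<or> g = Im" for g
  proof -
    have "(\<integral>z. g z \<partial>(PP \<bind> Q)) = (\<integral>t. (\<integral>z. g z \<partial>Q t) \<partial>PP)"
      using g integrable_mixture by (intro integral_bind_real[OF kernel PP.not_empty]) auto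
    also have "\<dots> = (\<integral>t. g (X t) \<partial>PP)"
    proof (rule integral_cong_AE)
      show "(\<lambda>t. \<integral>z. g z \<partial>Q t) \<in> borel_measurable PP"
        using g by (auto intro!: measurable_compose[OF kernel integral_measurable_subprob_algebra])
      show "(\<lambda>t. g (X t)) \<in> borel_measurable PP"
        using g measurable_X by auto
      show "AE t in PP. (\<integral>z. g z \<partial>Q t) = g (X t)"
        using AE_in_A
      proof eventually_elim
        case (elim t)
        then have "integrable (Q t) (\<lambda>z. z)" and "(\<integral>z. z \<partial>Q t) = X t"
          using has_integral_Q by (auto simp: has_bochner_integral_iff)
        then show ?case using g integral_Re integral_Im by auto
      qed
    qed
    also have "\<dots> = g (\<integral>t. X t \<partial>PP)"
      using g integral_Re[OF integrable_X] integral_Im[OF integrable_X] by auto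
    finally show ?thesis .
  qed
  show ?thesis
    using part[of Re] part[of Im] integral_Re[OF integrable_mixture] integral_Im[OF integrable_mixture]
    by (auto intro: complex_eqI)
qed

lemma mean_square_error_sample_mean:
  assumes \<Omega>: "prob_space \<Omega>" and indep: "prob_space.indep_vars \<Omega> (\<lambda>_. borel) Y {..<N}"
    and law: "\<And>l. l < N \<Longrightarrow> distr \<Omega> borel (Y l) = PP \<bind> Q" and "0 < N"
  shows "sample_mean N Y \<in> borel_measurable \<Omega>"
    and "integrable \<Omega> (\<lambda>\<omega>. (cmod (sample_mean N Y \<omega> - (\<integral>t. X t \<partial>PP)))\<^sup>2)"
    and "(\<integral>\<omega>. (cmod (sample_mean N Y \<omega> - (\<integral>t. X t \<partial>PP)))\<^sup>2 \<partial>\<Omega>) \<le> (\<sigma>\<^sup>2 + B\<^sup>2) / N"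
  using prob_space.mean_square_error_sample_mean[OF \<Omega> indep law
      integrable_mixture integral_mixture spread_mixture \<open>0 < N\<close>]
  by auto

end

section \<open>Quotients of two estimators\<close>

lemma (in prob_space) prob_cmod_gt_le:
  fixes D :: "'a \<Rightarrow> complex"
  assumes D: "D \<in> borel_measurable M" and int: "integrable M (\<lambda>\<omega>. (cmod (D \<omega>))\<^sup>2)"
    and second_moment: "(\<integral>\<omega>. (cmod (D \<omega>))\<^sup>2 \<partial>M) \<le> \<kappa> * a\<^sup>2" and "0 \<le> \<kappa>" and "0 \<le> a"
  shows "prob {\<omega> \<in> space M. a < cmod (D \<omega>)} \<le> \<kappa>"
proof (cases "a = 0")
  case True
  have "(\<integral>\<omega>. (cmod (D \<omega>))\<^sup>2 \<partial>M) = 0"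
    using second_moment True by (simp add: antisym integral_nonneg_AE)
  then have "AE \<omega> in M. \<not> a < cmod (D \<omega>)"
    using integral_nonneg_eq_0_iff_AE[OF int] True by (auto elim: AE_mp)
  then show ?thesis
    using prob_eq_0_AE \<open>0 \<le> \<kappa>\<close> by simp
next
  case False
  then have "0 < a\<^sup>2"
    using \<open>0 \<le> a\<close> by simp
  have "prob {\<omega> \<in> space M. a < cmod (D \<omega>)} \<le> prob {\<omega> \<in> space M. a\<^sup>2 \<le> (cmod (D \<omega>))\<^sup>2}"
    using \<open>0 \<le> a\<close> D by (intro finite_measure_mono) (auto intro: power_mono)
  also have "\<dots> \<le> (\<integral>\<omega>. (cmod (D \<omega>))\<^sup>2 \<partial>M) / a\<^sup>2"
    using \<open>0 < a\<^sup>2\<close> by (intro integral_Markov_inequality_measure[OF int]) auto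
  also have "\<dots> \<le> \<kappa>"
    using second_moment \<open>0 < a\<^sup>2\<close> by (simp add: divide_le_eq)
  finally show ?thesis .
qed

text \<open>Write \<open>a/b - w/d = ((a - w) - (w/d)(b - d))/b\<close> and use \<open>|b| \<ge> d - y\<close>.\<close>

lemma cmod_divide_diff_le:
  fixes a b w :: complex and d x y B \<epsilon> :: real
  assumes "0 < d" and "0 \<le> B" and "0 < \<epsilon>" and w: "cmod w \<le> B * d"
    and a: "cmod (a - w) \<le> x" and b: "cmod (b - complex_of_real d) \<le> y"
    and key: "x + (B + \<epsilon>) * y \<le> \<epsilon> * d"
  shows "cmod (a / b - w / complex_of_real d) \<le> \<epsilon>"
proof -
  have "0 \<le> x" and "0 \<le> y"
    using a b by (auto intro: order_trans[OF norm_ge_zero])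
  have b_ge: "d - y \<le> cmod b"
    using norm_triangle_ineq2[of "complex_of_real d" b] b \<open>0 < d\<close> by (simp add: norm_minus_commute)
  show ?thesis
  proof (cases "b = 0")
    case True
    then have "d \<le> y"
      using b \<open>0 < d\<close> by simp
    then have "\<epsilon> * d \<le> \<epsilon> * y"
      using \<open>0 < \<epsilon>\<close> by simp
    then have "x + B * y \<le> 0"
      using key unfolding distrib_right by linarith
    then have "x = 0" and "B * y = 0"
      using \<open>0 \<le> x\<close> mult_nonneg_nonneg[OF \<open>0 \<le> B\<close> \<open>0 \<le> y\<close>] by linarith+
    then have "B = 0"
      using \<open>d \<le> y\<close> \<open>0 < d\<close> by auto
    then show ?thesis
      using a w \<open>x = 0\<close> True \<open>0 < \<epsilon>\<close> by simp
  next
    case False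
    have eq: "a / b - w / complex_of_real d = (a - w - (w / complex_of_real d) * (b - complex_of_real d)) / b"
      using False \<open>0 < d\<close> by (simp add: field_simps)
    have "cmod (a - w - (w / complex_of_real d) * (b - complex_of_real d))
        \<le> cmod (a - w) + cmod (w / complex_of_real d) * cmod (b - complex_of_real d)"
      using norm_triangle_ineq4[of "a - w" "(w / complex_of_real d) * (b - complex_of_real d)"]
      by (simp add: norm_mult norm_divide)
    also have "\<dots> \<le> x + B * y"
      using w \<open>0 < d\<close> \<open>0 \<le> B\<close> by (intro add_mono a mult_mono b) (auto simp: norm_divide divide_le_eq)
    also have "\<dots> \<le> \<epsilon> * (d - y)"
      using key unfolding distrib_right right_diff_distrib by linarith
    also have "\<dots> \<le> \<epsilon> * cmod b"
      using b_ge \<open>0 < \<epsilon>\<close> by simp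
    finally show ?thesis
      unfolding eq using False by (simp add: norm_divide divide_le_eq)
  qed
qed

lemma (in prob_space) prob_divide_close_ge:
  fixes F G :: "'a \<Rightarrow> complex"
  assumes F: "F \<in> borel_measurable M" "integrable M (\<lambda>\<omega>. (cmod (F \<omega> - w))\<^sup>2)"
      "(\<integral>\<omega>. (cmod (F \<omega> - w))\<^sup>2 \<partial>M) \<le> \<kappa> * x\<^sup>2"
    and G: "G \<in> borel_measurable M" "integrable M (\<lambda>\<omega>. (cmod (G \<omega> - complex_of_real d))\<^sup>2)"
      "(\<integral>\<omega>. (cmod (G \<omega> - complex_of_real d))\<^sup>2 \<partial>M) \<le> \<kappa> * y\<^sup>2"
    and "0 \<le> \<kappa>" and "0 \<le> x" and "0 \<le> y" and "0 < d" and "0 \<le> B" and "0 < \<epsilon>"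
    and w: "cmod w \<le> B * d" and key: "x + (B + \<epsilon>) * y \<le> \<epsilon> * d"
  shows "prob {\<omega> \<in> space M. cmod (F \<omega> / G \<omega> - w / complex_of_real d) \<le> \<epsilon>} \<ge> 1 - 2 * \<kappa>"
proof -
  define bad_F where "bad_F = {\<omega> \<in> space M. x < cmod (F \<omega> - w)}"
  define bad_G where "bad_G = {\<omega> \<in> space M. y < cmod (G \<omega> - complex_of_real d)}"
  have sets: "bad_F \<in> events" "bad_G \<in> events"
    unfolding bad_F_def bad_G_def using F(1) G(1) by measurable
  have "prob bad_F \<le> \<kappa>" and "prob bad_G \<le> \<kappa>"
    unfolding bad_F_def bad_G_def using F G \<open>0 \<le> \<kappa>\<close> \<open>0 \<le> x\<close> \<open>0 \<le> y\<close>
    by (auto intro!: prob_cmod_gt_le)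
  then have "1 - 2 * \<kappa> \<le> prob (space M - (bad_F \<union> bad_G))"
    using sets prob_compl[of "bad_F \<union> bad_G"] measure_Un_le[of bad_F M bad_G] by auto
  also have "\<dots> \<le> prob {\<omega> \<in> space M. cmod (F \<omega> / G \<omega> - w / complex_of_real d) \<le> \<epsilon>}"
  proof (rule finite_measure_mono)
    show "{\<omega> \<in> space M. cmod (F \<omega> / G \<omega> - w / complex_of_real d) \<le> \<epsilon>} \<in> events"
      using F(1) G(1) by measurable
    show "space M - (bad_F \<union> bad_G) \<subseteq> {\<omega> \<in> space M. cmod (F \<omega> / G \<omega> - w / complex_of_real d) \<le> \<epsilon>}"
    proof
      fix \<omega> assume "\<omega> \<in> space M - (bad_F \<union> bad_G)"
      then have "\<omega> \<in> space M" and "cmod (F \<omega> - w) \<le> x" and "cmod (G \<omega> - complex_of_real d) \<le> y"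
        unfolding bad_F_def bad_G_def by auto
      with cmod_divide_diff_le[OF \<open>0 < d\<close> \<open>0 \<le> B\<close> \<open>0 < \<epsilon>\<close> w _ _ key]
      show "\<omega> \<in> {\<omega> \<in> space M. cmod (F \<omega> / G \<omega> - w / complex_of_real d) \<le> \<epsilon>}"
        by simp
    qed
  qed
  finally show ?thesis .
qed

section \<open>The guiding distribution and the variational state\<close>

lemma sets_Pmeas [simp, measurable_cong]: "sets (Pmeas \<Theta> \<alpha> lam) = sets borel"
  unfolding Pmeas_def by simp

locale guiding_density =
  fixes \<Theta> :: "(real^'k::finite) set" and \<alpha> :: "'p \<Rightarrow> real^'k \<Rightarrow> complex" and lam :: 'p
  assumes Theta_meas: "\<Theta> \<in> sets lborel"
    and alpha_meas: "\<alpha> lam \<in> borel_measurable lborel"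
    and C_finite: "set_integrable lborel \<Theta> (\<lambda>\<theta>. cmod (\<alpha> lam \<theta>))"
    and C_pos: "0 < Cnorm \<Theta> \<alpha> lam"
begin

abbreviation P :: "(real^'k) measure" where
  "P \<equiv> Pmeas \<Theta> \<alpha> lam"

lemma sets_Theta [measurable]: "\<Theta> \<in> sets borel"
  using Theta_meas by simp

lemma measurable_alpha [measurable]: "\<alpha> lam \<in> borel_measurable borel"
  using alpha_meas by (simp cong: measurable_cong_sets)

lemma measurable_Pdens [measurable]: "Pdens \<Theta> \<alpha> lam \<in> borel_measurable borel"
  unfolding Pdens_def by measurable

lemma measurable_phase [measurable]: "phase \<alpha> lam \<in> borel_measurable borel"
  unfolding phase_def by measurable

lemma prob_space_P: "prob_space P"
proof (rule prob_spaceI)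
  have "integrable lborel (\<lambda>\<theta>. indicator \<Theta> \<theta> * cmod (\<alpha> lam \<theta>) / Cnorm \<Theta> \<alpha> lam)"
    using C_finite unfolding set_integrable_def by (intro integrable_divide_zero) simp
  then have "(\<integral>\<^sup>+\<theta>. ennreal (indicator \<Theta> \<theta> * Pdens \<Theta> \<alpha> lam \<theta>) \<partial>lborel)
      = ennreal (\<integral>\<theta>. indicator \<Theta> \<theta> * cmod (\<alpha> lam \<theta>) / Cnorm \<Theta> \<alpha> lam \<partial>lborel)"
    unfolding Pdens_def using C_pos by (subst nn_integral_eq_integral) auto
  also have "\<dots> = 1"
    unfolding integral_divide_zero using C_pos by (simp add: Cnorm_def set_lebesgue_integral_def)
  finally show "emeasure P (space P) = 1"
    unfolding Pmeas_def by (simp add: emeasure_density)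
qed

lemma AE_P_in_Theta: "AE \<theta> in P. \<theta> \<in> \<Theta>"
  unfolding Pmeas_def by (subst AE_density) (auto simp: indicator_def)

lemma pair_prob_space_P: "pair_prob_space P P"
  using prob_space_P by (simp add: pair_prob_space_def pair_sigma_finite_def prob_space_imp_sigma_finite)

lemma prob_space_PP: "prob_space (P \<Otimes>\<^sub>M P)"
  using prob_space_P by (simp add: prob_space_pair)

lemma AE_PP_in_Theta: "AE t in P \<Otimes>\<^sub>M P. t \<in> \<Theta> \<times> \<Theta>"
proof (rule pair_sigma_finite.AE_pair_measure)
  show "pair_sigma_finite P P"
    using pair_prob_space_P by (simp add: pair_prob_space_def)
  show "AE x in P. AE y in P. (x, y) \<in> \<Theta> \<times> \<Theta>"
    using AE_P_in_Theta by eventually_elim (use AE_P_in_Theta in auto)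
qed measurable

end

lemma sampling_scheme_outcomes:
  assumes \<Omega>: "prob_space \<Omega>" and scheme: "sampling_scheme \<Omega> N PP Q T Y"
    and Q: "Q \<in> measurable PP (subprob_algebra borel)" and PP: "space PP \<noteq> {}"
  shows "prob_space.indep_vars \<Omega> (\<lambda>_. borel) Y {..<N}"
    and "\<And>l. l < N \<Longrightarrow> distr \<Omega> borel (Y l) = PP \<bind> Q"
proof -
  interpret prob_space \<Omega> by (rule \<Omega>)
  have indep: "indep_vars (\<lambda>_. PP \<Otimes>\<^sub>M borel) (\<lambda>l \<omega>. (T l \<omega>, Y l \<omega>)) {..<N}"
    using scheme unfolding sampling_scheme_def by simp
  then show "indep_vars (\<lambda>_. borel) Y {..<N}"
    using indep_vars_compose2[where Y="\<lambda>_. snd" and N="\<lambda>_. borel", OF indep] by simp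
  fix l assume "l < N"
  have TY: "(\<lambda>\<omega>. (T l \<omega>, Y l \<omega>)) \<in> measurable \<Omega> (PP \<Otimes>\<^sub>M borel)"
    using indep \<open>l < N\<close> unfolding indep_vars_def by auto
  have "distr \<Omega> borel (Y l) = distr (distr \<Omega> (PP \<Otimes>\<^sub>M borel) (\<lambda>\<omega>. (T l \<omega>, Y l \<omega>))) borel snd"
    by (simp add: distr_distr[OF measurable_snd TY] comp_def)
  also have "\<dots> = PP \<bind> Q"
    using scheme \<open>l < N\<close> unfolding sampling_scheme_def by (simp add: distr_snd_bind_kernel_Pair[OF Q PP])
  finally show "distr \<Omega> borel (Y l) = PP \<bind> Q" .
qed

locale variational_state = guiding_density \<Theta> \<alpha> lam
  for \<Theta> :: "(real^'k::finite) set" and \<alpha> :: "'p \<Rightarrow> real^'k \<Rightarrow> complex" and lam :: 'p +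
  fixes n :: nat and U :: "real^'k \<Rightarrow> nat \<Rightarrow> nat \<Rightarrow> complex"
  assumes U_meas: "\<And>i j. (\<lambda>\<theta>. U \<theta> i j) \<in> borel_measurable lborel"
    and U_unitary: "\<And>\<theta>. \<theta> \<in> \<Theta> \<Longrightarrow> unitary_mat (qdim n) (U \<theta>)"
begin

definition amplitude :: "nat \<Rightarrow> real^'k \<Rightarrow> complex" where
  "amplitude i \<theta> = phase \<alpha> lam \<theta> * circ_state n U \<theta> i"

lemma measurable_amplitude [measurable]: "amplitude i \<in> borel_measurable borel"
proof -
  have "(\<lambda>\<theta>. U \<theta> i 0) \<in> borel_measurable borel"
    using U_meas by (simp cong: measurable_cong_sets)
  then show ?thesis
    unfolding amplitude_def[abs_def] circ_state_eq by measurable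
qed

lemma cmod_amplitude_le:
  assumes "\<theta> \<in> \<Theta>" and "i < qdim n"
  shows "cmod (amplitude i \<theta>) \<le> 1"
proof -
  have "cmod (circ_state n U \<theta> i) \<le> 1"
    using cmod_le_vnorm[OF assms(2)] vnorm_circ_state[of n U \<theta>, OF U_unitary[OF assms(1)]] by metis
  then show ?thesis
    unfolding amplitude_def norm_mult using cmod_phase_le[of \<alpha> lam \<theta>] by (simp add: mult_le_one)
qed

lemma psi_eq_integral_amplitude: "psi n \<Theta> \<alpha> U lam i = (\<integral>\<theta>. amplitude i \<theta> \<partial>P)"
proof -
  have "(\<integral>\<theta>. amplitude i \<theta> \<partial>P) = (\<integral>\<theta>. (indicator \<Theta> \<theta> * Pdens \<Theta> \<alpha> lam \<theta>) *\<^sub>R amplitude i \<theta> \<partial>lborel)"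
    unfolding Pmeas_def using C_pos
    by (intro integral_density) (auto simp: Pdens_def cong: measurable_cong_sets)
  also have "\<dots> = psi n \<Theta> \<alpha> U lam i"
    unfolding psi_def set_lebesgue_integral_def amplitude_def
    by (rule Bochner_Integration.integral_cong[OF refl]) (simp add: scaleR_conv_of_real mult_ac)
  finally show ?thesis ..
qed

lemma Xval_eq_sum_amplitude: "Xval n \<alpha> U lam Op t =
   (\<Sum>i<qdim n. \<Sum>j<qdim n. Op i j * (cnj (amplitude i (snd t)) * amplitude j (fst t)))"
proof -
  define c where "c = phase \<alpha> lam (fst t) * cnj (phase \<alpha> lam (snd t))"
  have "Xval n \<alpha> U lam Op t = (\<Sum>i<qdim n. \<Sum>j<qdim n.
      c * (cnj (circ_state n U (snd t) i) * (Op i j * circ_state n U (fst t) j)))"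
    unfolding Xval_def cinner_def mat_app_def c_def by (simp only: sum_distrib_left)
  then show ?thesis
    unfolding c_def amplitude_def by (simp add: algebra_simps)
qed

lemma integrable_amplitude_pair:
  assumes "i < qdim n" and "j < qdim n"
  shows "integrable (P \<Otimes>\<^sub>M P) (\<lambda>t. cnj (amplitude i (snd t)) * amplitude j (fst t))"
proof -
  interpret prob_space "P \<Otimes>\<^sub>M P"
    by (rule prob_space_PP)
  have "AE t in P \<Otimes>\<^sub>M P. norm (cnj (amplitude i (snd t)) * amplitude j (fst t)) \<le> 1"
    using AE_PP_in_Theta
    by eventually_elim (auto simp: norm_mult intro!: mult_le_one cmod_amplitude_le assms)
  then show ?thesis
    by (rule integrable_const_bound) measurable
qed

lemma integral_amplitude_pair:
  assumes "i < qdim n" and "j < qdim n"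
  shows "(\<integral>t. cnj (amplitude i (snd t)) * amplitude j (fst t) \<partial>(P \<Otimes>\<^sub>M P))
     = cnj (psi n \<Theta> \<alpha> U lam i) * psi n \<Theta> \<alpha> U lam j"
proof -
  interpret pair_prob_space P P
    by (rule pair_prob_space_P)
  show ?thesis
    using integral_fst'[OF integrable_amplitude_pair[OF assms]]
    by (simp add: psi_eq_integral_amplitude)
qed

lemma measurable_Xval: "Xval n \<alpha> U lam Op \<in> borel_measurable (P \<Otimes>\<^sub>M P)"
  unfolding Xval_eq_sum_amplitude[abs_def] by measurable

lemma integral_Xval: "(\<integral>t. Xval n \<alpha> U lam Op t \<partial>(P \<Otimes>\<^sub>M P)) = expval n \<Theta> \<alpha> U lam Op"
proof -
  let ?F = "\<lambda>i j t. Op i j * (cnj (amplitude i (snd t)) * amplitude j (fst t))"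
  have int: "integrable (P \<Otimes>\<^sub>M P) (?F i j)" if "i < qdim n" "j < qdim n" for i j
    using integrable_amplitude_pair[OF that] by simp
  have "(\<integral>t. Xval n \<alpha> U lam Op t \<partial>(P \<Otimes>\<^sub>M P)) = (\<Sum>i<qdim n. \<integral>t. (\<Sum>j<qdim n. ?F i j t) \<partial>(P \<Otimes>\<^sub>M P))"
    unfolding Xval_eq_sum_amplitude
    by (rule Bochner_Integration.integral_sum) (auto intro!: Bochner_Integration.integrable_sum int)
  also have "\<dots> = (\<Sum>i<qdim n. \<Sum>j<qdim n. \<integral>t. ?F i j t \<partial>(P \<Otimes>\<^sub>M P))"
    by (intro sum.cong refl Bochner_Integration.integral_sum) (auto intro: int)
  also have "\<dots> = (\<Sum>i<qdim n. \<Sum>j<qdim n. Op i j * (cnj (psi n \<Theta> \<alpha> U lam i) * psi n \<Theta> \<alpha> U lam j))"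
    by (simp add: integral_amplitude_pair)
  also have "\<dots> = expval n \<Theta> \<alpha> U lam Op"
    unfolding expval_def cinner_def mat_app_def
    by (simp only: sum_distrib_left) (intro sum.cong refl, simp add: algebra_simps)
  finally show ?thesis .
qed

lemma mean_square_error_estimator:
  assumes proc: "meas_procedure (P \<Otimes>\<^sub>M P) \<Theta> (Xval n \<alpha> U lam Op) \<sigma> Q"
    and \<Omega>: "prob_space \<Omega>" and scheme: "sampling_scheme \<Omega> N (P \<Otimes>\<^sub>M P) Q T Y" and "0 < N"
  shows "sample_mean N Y \<in> borel_measurable \<Omega>"
    and "integrable \<Omega> (\<lambda>\<omega>. (cmod (sample_mean N Y \<omega> - expval n \<Theta> \<alpha> U lam Op))\<^sup>2)"
    and "(\<integral>\<omega>. (cmod (sample_mean N Y \<omega> - expval n \<Theta> \<alpha> U lam Op))\<^sup>2 \<partial>\<Omega>)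
           \<le> (\<sigma>\<^sup>2 + (spec_norm (qdim n) Op)\<^sup>2) / N"
proof -
  from proc have kernel: "Q \<in> measurable (P \<Otimes>\<^sub>M P) (subprob_algebra borel)"
    and Q: "\<And>t. t \<in> \<Theta> \<times> \<Theta> \<Longrightarrow> prob_space (Q t) \<and> has_bochner_integral (Q t) (\<lambda>z. z) (Xval n \<alpha> U lam Op t)
      \<and> (\<integral>\<^sup>+z. ennreal ((cmod (z - Xval n \<alpha> U lam Op t))\<^sup>2) \<partial>Q t) \<le> ennreal (\<sigma>\<^sup>2)"
    unfolding meas_procedure_def by blast+
  interpret unbiased_kernel "P \<Otimes>\<^sub>M P" "\<Theta> \<times> \<Theta>" Q "Xval n \<alpha> U lam Op" \<sigma> "spec_norm (qdim n) Op"
  proof (rule unbiased_kernel.intro)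
    show "prob_space (P \<Otimes>\<^sub>M P)" "Q \<in> measurable (P \<Otimes>\<^sub>M P) (subprob_algebra borel)"
      "AE t in P \<Otimes>\<^sub>M P. t \<in> \<Theta> \<times> \<Theta>" "Xval n \<alpha> U lam Op \<in> borel_measurable (P \<Otimes>\<^sub>M P)"
      by (fact prob_space_PP kernel AE_PP_in_Theta measurable_Xval)+
    fix t assume t: "t \<in> \<Theta> \<times> \<Theta>"
    then show "prob_space (Q t)" "has_bochner_integral (Q t) (\<lambda>z. z) (Xval n \<alpha> U lam Op t)"
      "(\<integral>\<^sup>+z. ennreal ((cmod (z - Xval n \<alpha> U lam Op t))\<^sup>2) \<partial>Q t) \<le> ennreal (\<sigma>\<^sup>2)"
      using Q by blast+
    show "cmod (Xval n \<alpha> U lam Op t) \<le> spec_norm (qdim n) Op"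
      using t by (intro cmod_Xval_le U_unitary) auto
  qed
  note outcomes = sampling_scheme_outcomes[OF \<Omega> scheme kernel PP.not_empty]
  show "sample_mean N Y \<in> borel_measurable \<Omega>"
    and "integrable \<Omega> (\<lambda>\<omega>. (cmod (sample_mean N Y \<omega> - expval n \<Theta> \<alpha> U lam Op))\<^sup>2)"
    and "(\<integral>\<omega>. (cmod (sample_mean N Y \<omega> - expval n \<Theta> \<alpha> U lam Op))\<^sup>2 \<partial>\<Omega>)
           \<le> (\<sigma>\<^sup>2 + (spec_norm (qdim n) Op)\<^sup>2) / N"
    using mean_square_error_sample_mean[OF \<Omega> outcomes \<open>0 < N\<close>] unfolding integral_Xval by simp_all
qed

end

lemma sample_size_suffices:
  fixes B s t \<epsilon> \<kappa> d :: real
  assumes "0 < \<kappa>" and "0 < \<epsilon>" and "0 < d" and "0 \<le> B"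
    and M: "real M \<ge> (sqrt (B\<^sup>2 + s\<^sup>2) + sqrt (1 + t\<^sup>2) * B + \<epsilon> * sqrt (1 + t\<^sup>2))\<^sup>2 / (\<kappa> * \<epsilon>\<^sup>2 * d\<^sup>2)"
  obtains x y where "0 < M" and "0 \<le> x" and "0 \<le> y"
    and "(s\<^sup>2 + B\<^sup>2) / M \<le> \<kappa> * x\<^sup>2" and "(t\<^sup>2 + 1) / M \<le> \<kappa> * y\<^sup>2"
    and "x + (B + \<epsilon>) * y \<le> \<epsilon> * d"
proof -
  define chi where "chi = sqrt (B\<^sup>2 + s\<^sup>2) + sqrt (1 + t\<^sup>2) * B + \<epsilon> * sqrt (1 + t\<^sup>2)"
  have "0 < sqrt (1 + t\<^sup>2)"
    by (simp add: add_pos_nonneg)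
  then have "0 < chi"
    unfolding chi_def using \<open>0 \<le> B\<close> \<open>0 < \<epsilon>\<close>
    by (intro add_nonneg_pos add_nonneg_nonneg mult_nonneg_nonneg mult_pos_pos) auto
  have den: "0 < \<kappa> * \<epsilon>\<^sup>2 * d\<^sup>2"
    using \<open>0 < \<kappa>\<close> \<open>0 < \<epsilon>\<close> \<open>0 < d\<close> by simp
  have chi_le: "chi\<^sup>2 \<le> real M * (\<kappa> * \<epsilon>\<^sup>2 * d\<^sup>2)"
    using M unfolding chi_def[symmetric] pos_divide_le_eq[OF den] .
  then have "0 < M"
    using \<open>0 < chi\<close> by (cases "M = 0") auto
  define r where "r = sqrt (real M * \<kappa>)"
  have "0 < r"
    unfolding r_def using \<open>0 < M\<close> \<open>0 < \<kappa>\<close> by simp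
  have r_square: "r\<^sup>2 = real M * \<kappa>"
    unfolding r_def using \<open>0 < \<kappa>\<close> by simp
  have "(r * (\<epsilon> * d))\<^sup>2 = real M * (\<kappa> * \<epsilon>\<^sup>2 * d\<^sup>2)"
    unfolding power_mult_distrib r_square by (simp only: ac_simps)
  then have "chi\<^sup>2 \<le> (r * (\<epsilon> * d))\<^sup>2"
    using chi_le by (simp only:)
  then have "chi \<le> r * (\<epsilon> * d)"
    by (rule power2_le_imp_le) (use \<open>0 < r\<close> \<open>0 < \<epsilon>\<close> \<open>0 < d\<close> in simp)
  show ?thesis
  proof (rule that[of "sqrt (B\<^sup>2 + s\<^sup>2) / r" "sqrt (1 + t\<^sup>2) / r"])
    show "0 < M" and "0 \<le> sqrt (B\<^sup>2 + s\<^sup>2) / r" and "0 \<le> sqrt (1 + t\<^sup>2) / r"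
      using \<open>0 < M\<close> \<open>0 < r\<close> by auto
    show "(s\<^sup>2 + B\<^sup>2) / M \<le> \<kappa> * (sqrt (B\<^sup>2 + s\<^sup>2) / r)\<^sup>2"
      and "(t\<^sup>2 + 1) / M \<le> \<kappa> * (sqrt (1 + t\<^sup>2) / r)\<^sup>2"
      unfolding power_divide r_square using \<open>0 < \<kappa>\<close> by (simp_all add: add.commute)
    have "sqrt (B\<^sup>2 + s\<^sup>2) / r + (B + \<epsilon>) * (sqrt (1 + t\<^sup>2) / r) = chi / r"
      unfolding chi_def by (simp add: add_divide_distrib algebra_simps)
    also have "\<dots> \<le> \<epsilon> * d"
      using \<open>chi \<le> r * (\<epsilon> * d)\<close> \<open>0 < r\<close> by (simp add: divide_le_eq mult_ac)
    finally show "sqrt (B\<^sup>2 + s\<^sup>2) / r + (B + \<epsilon>) * (sqrt (1 + t\<^sup>2) / r) \<le> \<epsilon> * d" .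
  qed
qed

theorem theorem1:
  fixes n :: nat
    and \<Theta> :: "(real^'k::finite) set"
    and U :: "real^'k \<Rightarrow> nat \<Rightarrow> nat \<Rightarrow> complex"
    and \<alpha> :: "'p \<Rightarrow> real^'k \<Rightarrow> complex"
    and lam :: 'p
    and Op :: "nat \<Rightarrow> nat \<Rightarrow> complex"
    and \<Omega> :: "'w measure"
    and M :: nat
    and QO QI :: "(real^'k) \<times> (real^'k) \<Rightarrow> complex measure"
    and TO TI :: "nat \<Rightarrow> 'w \<Rightarrow> (real^'k) \<times> (real^'k)"
    and YO YI :: "nat \<Rightarrow> 'w \<Rightarrow> complex"
    and \<sigma>O \<sigma>I \<epsilon> \<kappa> :: real
  assumes Theta_meas: "\<Theta> \<in> sets lborel"
    and U_meas: "\<And>i j. (\<lambda>\<theta>. U \<theta> i j) \<in> borel_measurable lborel"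
    and U_unitary: "\<And>\<theta>. \<theta> \<in> \<Theta> \<Longrightarrow> unitary_mat (qdim n) (U \<theta>)"
    and alpha_meas: "\<alpha> lam \<in> borel_measurable lborel"
    and C_finite: "set_integrable lborel \<Theta> (\<lambda>\<theta>. cmod (\<alpha> lam \<theta>))"
    and C_pos: "Cnorm \<Theta> \<alpha> lam > 0"
    and procO: "meas_procedure (Pmeas \<Theta> \<alpha> lam \<Otimes>\<^sub>M Pmeas \<Theta> \<alpha> lam) \<Theta>
                  (Xval n \<alpha> U lam Op) \<sigma>O QO"
    and procI: "meas_procedure (Pmeas \<Theta> \<alpha> lam \<Otimes>\<^sub>M Pmeas \<Theta> \<alpha> lam) \<Theta>
                  (Xval n \<alpha> U lam id_op) \<sigma>I QI"
    and Omega: "prob_space \<Omega>"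
    and sampO: "sampling_scheme \<Omega> M (Pmeas \<Theta> \<alpha> lam \<Otimes>\<^sub>M Pmeas \<Theta> \<alpha> lam) QO TO YO"
    and sampI: "sampling_scheme \<Omega> M (Pmeas \<Theta> \<alpha> lam \<Otimes>\<^sub>M Pmeas \<Theta> \<alpha> lam) QI TI YI"
    and norm_pos: "Re (expval n \<Theta> \<alpha> U lam id_op) > 0"
    and eps_pos: "\<epsilon> > 0"
    and kappa_pos: "\<kappa> > 0"
    and M_bound: "real M \<ge>
       (sqrt ((spec_norm (qdim n) Op)\<^sup>2 + \<sigma>O\<^sup>2) + sqrt (1 + \<sigma>I\<^sup>2) * spec_norm (qdim n) Op
          + \<epsilon> * sqrt (1 + \<sigma>I\<^sup>2))\<^sup>2
       / (\<kappa> * \<epsilon>\<^sup>2 * (Re (expval n \<Theta> \<alpha> U lam id_op))\<^sup>2)"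
  shows "measure \<Omega> {\<omega> \<in> space \<Omega>.
            cmod (sample_mean M YO \<omega> / sample_mean M YI \<omega>
                  - expval n \<Theta> \<alpha> U lam Op / expval n \<Theta> \<alpha> U lam id_op) \<le> \<epsilon>}
         \<ge> 1 - 2 * \<kappa>"
proof -
  interpret variational_state \<Theta> \<alpha> lam n U
    by unfold_locales (fact Theta_meas alpha_meas C_finite C_pos U_meas U_unitary)+
  define d where "d = Re (expval n \<Theta> \<alpha> U lam id_op)"
  have norm_eq: "expval n \<Theta> \<alpha> U lam id_op = complex_of_real d"
    unfolding d_def expval_id_op by simp
  obtain x y where "0 < M" "0 \<le> x" "0 \<le> y"
    and x: "(\<sigma>O\<^sup>2 + (spec_norm (qdim n) Op)\<^sup>2) / M \<le> \<kappa> * x\<^sup>2"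
    and y: "(\<sigma>I\<^sup>2 + 1) / M \<le> \<kappa> * y\<^sup>2"
    and key: "x + (spec_norm (qdim n) Op + \<epsilon>) * y \<le> \<epsilon> * d"
    using sample_size_suffices[OF kappa_pos eps_pos norm_pos spec_norm_nonneg[OF qdim_pos] M_bound]
    unfolding d_def .
  note O = mean_square_error_estimator[OF procO Omega sampO \<open>0 < M\<close>]
  note I = mean_square_error_estimator[OF procI Omega sampI \<open>0 < M\<close>,
      unfolded spec_norm_id_op[OF qdim_pos] power_one norm_eq]
  show ?thesis
    unfolding norm_eq
    by (rule prob_space.prob_divide_close_ge[OF Omega O(1,2) order.trans[OF O(3) x] I(1,2) order.trans[OF I(3) y]
          _ \<open>0 \<le> x\<close> \<open>0 \<le> y\<close> norm_pos[folded d_def] spec_norm_nonneg[OF qdim_pos] eps_pos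
          cmod_expval_le[of n \<Theta> \<alpha> U lam Op, folded d_def] key])
       (use kappa_pos in simp)
qed

end
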